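(* Let $X$ be a flag simplicial complex with vertex set $S$, let $W$ be the associated right-angled Coxeter group, and suppose that the radius of convergence of the growth series $W(t)$ equals $1$. Then $X$ is the join of a cross-polytope and a simplex.
   Context: Flag: every set of pairwise adjacent vertices is a face. The right-angled Coxeter group of $X$ is $W=\langle S\mid s^2=1\ (s\in S),\ st=ts\ (\{s,t\}\in X)\rangle$. Its growth series is $W(t)=\sum_{w\in W}t^{\ell(w)}$, where $\ell$ is word length with respect to $S$. The join of complexes on disjoint vertex sets is $\{\sigma\cup\tau:\sigma\in X,\tau\in Y\}$; a cross-polytope is the $k$-fold join of the complex with two vertices and no edge; a simplex is the complex of all subsets of a finite set. *)

theory Defs
  imports "HOL-Analysis.Analysis" "HOL-Library.Disjoint_Sets"
begin

definition simplicial_complex :: "'a set \<Rightarrow> 'a set set \<Rightarrow> bool" where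
  "simplicial_complex S X \<longleftrightarrow> finite S \<and> X \<subseteq> Pow S \<and> {} \<in> X \<and>
     (\<forall>\<sigma>\<in>X. \<forall>\<tau>. \<tau> \<subseteq> \<sigma> \<longrightarrow> \<tau> \<in> X) \<and> (\<forall>s\<in>S. {s} \<in> X)"

definition flag_complex :: "'a set \<Rightarrow> 'a set set \<Rightarrow> bool" where
  "flag_complex S X \<longleftrightarrow> simplicial_complex S X \<and>
     (\<forall>\<sigma>. \<sigma> \<subseteq> S \<longrightarrow> (\<forall>s\<in>\<sigma>. \<forall>t\<in>\<sigma>. s \<noteq> t \<longrightarrow> {s, t} \<in> X) \<longrightarrow> \<sigma> \<in> X)"

(* One elementary move on words over S in the presentation
   W = < S | s^2 = 1, st = ts ({s,t} in X) >: insert/delete ss, or swap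
   two adjacent letters spanning an edge. Since all generators are involutions,
   W is the quotient of the free monoid on S by the congruence generated by these moves. *)
definition racg_step :: "'a set \<Rightarrow> 'a set set \<Rightarrow> 'a list \<Rightarrow> 'a list \<Rightarrow> bool" where
  "racg_step S X u v \<longleftrightarrow> (\<exists>p q s t.
      (s \<in> S \<and> u = p @ [s, s] @ q \<and> v = p @ q) \<or>
      (s \<in> S \<and> u = p @ q \<and> v = p @ [s, s] @ q) \<or>
      ({s, t} \<in> X \<and> u = p @ [s, t] @ q \<and> v = p @ [t, s] @ q))"

definition racg_equiv :: "'a set \<Rightarrow> 'a set set \<Rightarrow> 'a list \<Rightarrow> 'a list \<Rightarrow> bool" where
  "racg_equiv S X = (racg_step S X)\<^sup>*\<^sup>*"

definition racg_elem :: "'a set \<Rightarrow> 'a set set \<Rightarrow> 'a list \<Rightarrow> 'a list set" where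
  "racg_elem S X w = {v \<in> lists S. racg_equiv S X w v}"

definition racg :: "'a set \<Rightarrow> 'a set set \<Rightarrow> 'a list set set" where
  "racg S X = racg_elem S X ` lists S"

definition racg_length :: "'a list set \<Rightarrow> nat" where
  "racg_length g = (LEAST n. \<exists>w\<in>g. length w = n)"

(* n-th coefficient of the growth series W(t) = sum_{w in W} t^{l(w)}. *)
definition growth_coeff :: "'a set \<Rightarrow> 'a set set \<Rightarrow> nat \<Rightarrow> nat" where
  "growth_coeff S X n = card {g \<in> racg S X. racg_length g = n}"

(* Join of complexes (on disjoint vertex sets). *)
definition join_complex :: "'a set set \<Rightarrow> 'a set set \<Rightarrow> 'a set set" where
  "join_complex X Y = {\<sigma> \<union> \<tau> | \<sigma> \<tau>. \<sigma> \<in> X \<and> \<tau> \<in> Y}"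

(* Cross-polytope: the join of the k two-vertex edgeless complexes {{},{a},{b}}
   for the pairs {a,b} in P; its faces are the subsets of the union of P
   containing at most one vertex of each pair. *)
definition cross_polytope :: "'a set set \<Rightarrow> 'a set set" where
  "cross_polytope P = {\<sigma>. \<sigma> \<subseteq> \<Union>P \<and> (\<forall>p\<in>P. \<not> p \<subseteq> \<sigma>)}"

definition full_simplex :: "'a set \<Rightarrow> 'a set set" where
  "full_simplex B = Pow B"

end

(* If a vertex s had two distinct non-neighbours t and u, sending s to the generator of Z/2,
   t and u to the two generators of Z/2 x Z/2, and every other vertex to 1 would define a
   homomorphism from W to the free product Z/2 * (Z/2 x Z/2).  Normal forms in this free product
   show that the 2^k words a1 s a2 s ... ak s with all ai in {t, u} represent 2^k distinct
   elements of length 2k, so the radius of convergence would be at most 1/sqrt 2.  Hence every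
   vertex has at most one non-neighbour: the non-edges form a matching P, and the flag condition
   makes X the join of the cross-polytope on P with the simplex on the remaining vertices.
   P is nonempty, since otherwise all generators commute, every element is represented by a word
   without repeated letters, W is finite and the radius is infinite. *)

theory Submission
  imports Defs "HOL-Library.Z2"
begin

section \<open>Words and elements\<close>

lemma symp_racg_step: "symp (racg_step S X)"
proof (rule sympI)
  fix u v assume "racg_step S X u v"
  then obtain p q s t where
    "(s \<in> S \<and> u = p @ [s, s] @ q \<and> v = p @ q) \<or> (s \<in> S \<and> u = p @ q \<and> v = p @ [s, s] @ q) \<or>
     ({t, s} \<in> X \<and> u = p @ [s, t] @ q \<and> v = p @ [t, s] @ q)"
    unfolding racg_step_def by (auto simp: insert_commute)
  then show "racg_step S X v u"
    unfolding racg_step_def by blast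
qed

lemma racg_equiv_refl: "racg_equiv S X w w"
  unfolding racg_equiv_def by simp

lemma racg_equiv_sym: "racg_equiv S X w v \<Longrightarrow> racg_equiv S X v w"
  unfolding racg_equiv_def by (rule sympD[OF symp_rtranclp[OF symp_racg_step]])

lemma racg_equiv_trans [trans]:
  "racg_equiv S X u v \<Longrightarrow> racg_equiv S X v w \<Longrightarrow> racg_equiv S X u w"
  unfolding racg_equiv_def by simp

lemma racg_equiv_step: "racg_step S X w v \<Longrightarrow> racg_equiv S X w v"
  unfolding racg_equiv_def by simp

lemma racg_equiv_cancel: "s \<in> S \<Longrightarrow> racg_equiv S X (p @ s # s # q) (p @ q)"
  by (rule racg_equiv_step) (auto simp: racg_step_def)

lemma racg_equiv_swap: "{s, t} \<in> X \<Longrightarrow> racg_equiv S X (p @ s # t # q) (p @ t # s # q)"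
  by (rule racg_equiv_step) (auto simp: racg_step_def)

lemma racg_elem_eqI: "racg_equiv S X w v \<Longrightarrow> racg_elem S X w = racg_elem S X v"
  unfolding racg_elem_def using racg_equiv_sym racg_equiv_trans by blast

lemma racg_elem_self: "w \<in> lists S \<Longrightarrow> w \<in> racg_elem S X w"
  unfolding racg_elem_def by (simp add: racg_equiv_refl)

lemma racg_length_le: "w \<in> g \<Longrightarrow> racg_length g \<le> length w"
  unfolding racg_length_def by (rule Least_le) blast

lemma racg_length_attained: "g \<noteq> {} \<Longrightarrow> \<exists>w\<in>g. length w = racg_length g"
  unfolding racg_length_def by (rule LeastI_ex) blast

lemma le_racg_length:
  assumes "g \<noteq> {}" and "\<And>v. v \<in> g \<Longrightarrow> m \<le> length v"
  shows "m \<le> racg_length g"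
  using racg_length_attained[OF assms(1)] assms(2) by force

lemma finite_racg_level:
  assumes "finite S"
  shows "finite {g \<in> racg S X. racg_length g = n}"
proof (rule finite_subset)
  show "{g \<in> racg S X. racg_length g = n} \<subseteq> racg_elem S X ` {w. set w \<subseteq> S \<and> length w = n}"
  proof
    fix g assume "g \<in> {g \<in> racg S X. racg_length g = n}"
    then obtain w where w: "w \<in> lists S" "g = racg_elem S X w" and n: "racg_length g = n"
      unfolding racg_def by blast
    then have "g \<noteq> {}" using racg_elem_self[OF w(1)] by auto
    then obtain v where v: "v \<in> g" "length v = n" using racg_length_attained n by blast
    then have "v \<in> lists S" "racg_equiv S X w v" using w(2) unfolding racg_elem_def by auto
    moreover from this(2) have "g = racg_elem S X v" unfolding w(2) by (rule racg_elem_eqI)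
    ultimately show "g \<in> racg_elem S X ` {w. set w \<subseteq> S \<and> length w = n}" using v by auto
  qed
  show "finite (racg_elem S X ` {w. set w \<subseteq> S \<and> length w = n})"
    using assms by (simp add: finite_lists_length_eq)
qed

section \<open>Normal forms in the free product of \<open>\<int>/2\<close> with an abelian group\<close>

text \<open>A nonempty list \<open>[g\<^sub>0, g\<^sub>1, \<dots>, g\<^sub>n]\<close> over an abelian group \<open>G\<close> with \<open>g\<^sub>1, \<dots>, g\<^sub>n\<^sub>-\<^sub>1 \<noteq> 0\<close>
  is the normal form of \<open>g\<^sub>n s \<cdots> g\<^sub>1 s g\<^sub>0\<close> in the free product of \<open>\<langle>s\<rangle> \<cong> \<int>/2\<close> with \<open>G\<close>;
  right multiplication by \<open>s\<close> or by an element of \<open>G\<close> only changes the head.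
  \<open>nf_length\<close> is the word length with respect to \<open>s\<close> and \<open>G - {0}\<close>.\<close>

fun is_nf :: "'g::zero list \<Rightarrow> bool" where
  "is_nf (g # h # r) \<longleftrightarrow> (r \<noteq> [] \<longrightarrow> h \<noteq> 0) \<and> is_nf (h # r)"
| "is_nf [g] \<longleftrightarrow> True"
| "is_nf [] \<longleftrightarrow> False"

fun nf_times_s :: "'g::zero list \<Rightarrow> 'g list" where
  "nf_times_s (g # h # r) = (if g = 0 then h # r else 0 # g # h # r)"
| "nf_times_s r = 0 # r"

fun nf_times :: "'g::plus \<Rightarrow> 'g list \<Rightarrow> 'g list" where
  "nf_times x (g # r) = (x + g) # r"
| "nf_times x [] = [x]"

definition nf_length :: "'g::zero list \<Rightarrow> nat" where
  "nf_length L = length (filter (\<lambda>g. g \<noteq> 0) L) + length L - 1"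

lemma is_nf_nonempty: "is_nf L \<Longrightarrow> L \<noteq> []"
  by auto

lemma is_nf_nf_times_s: "is_nf L \<Longrightarrow> is_nf (nf_times_s L)"
  by (induction L rule: nf_times_s.induct) auto

lemma is_nf_nf_times: "is_nf L \<Longrightarrow> is_nf (nf_times x L)"
  by (cases L rule: is_nf.cases) auto

lemma nf_times_s_nf_times_s: "is_nf L \<Longrightarrow> nf_times_s (nf_times_s L) = L"
proof (induction L rule: nf_times_s.induct)
  case (1 g h r)
  then show ?case by (cases r) auto
qed auto

lemma nf_times_nf_times:
  fixes x y :: "'g::semigroup_add"
  shows "L \<noteq> [] \<Longrightarrow> nf_times x (nf_times y L) = nf_times (x + y) L"
  by (cases L) (auto simp: add.assoc)

lemma nf_times_zero: "L \<noteq> [] \<Longrightarrow> nf_times (0::'g::monoid_add) L = L"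
  by (cases L) auto

lemma nf_length_nf_times_s: "is_nf L \<Longrightarrow> nf_length (nf_times_s L) \<le> nf_length L + 1"
  by (cases L rule: nf_times_s.cases) (auto simp: nf_length_def)

lemma nf_length_nf_times: "L \<noteq> [] \<Longrightarrow> nf_length (nf_times x L) \<le> nf_length L + 1"
  by (cases L) (auto simp: nf_length_def)

definition nf_letter :: "'a \<Rightarrow> ('a \<Rightarrow> 'g::ab_group_add) \<Rightarrow> 'a \<Rightarrow> 'g list \<Rightarrow> 'g list" where
  "nf_letter s \<phi> a = (if a = s then nf_times_s else nf_times (\<phi> a))"

definition nf_act :: "'a \<Rightarrow> ('a \<Rightarrow> 'g::ab_group_add) \<Rightarrow> 'a list \<Rightarrow> 'g list \<Rightarrow> 'g list" where
  "nf_act s \<phi> w L = foldl (\<lambda>L a. nf_letter s \<phi> a L) L w"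

lemma nf_act_Nil [simp]: "nf_act s \<phi> [] L = L"
  and nf_act_Cons [simp]: "nf_act s \<phi> (a # w) L = nf_act s \<phi> w (nf_letter s \<phi> a L)"
  and nf_act_append [simp]: "nf_act s \<phi> (v @ w) L = nf_act s \<phi> w (nf_act s \<phi> v L)"
  by (simp_all add: nf_act_def)

lemma is_nf_nf_letter: "is_nf L \<Longrightarrow> is_nf (nf_letter s \<phi> a L)"
  by (simp add: nf_letter_def is_nf_nf_times_s is_nf_nf_times)

lemma is_nf_nf_act: "is_nf L \<Longrightarrow> is_nf (nf_act s \<phi> w L)"
  by (induction w arbitrary: L) (simp_all add: is_nf_nf_letter)

lemma nf_length_nf_act: "is_nf L \<Longrightarrow> nf_length (nf_act s \<phi> w L) \<le> nf_length L + length w"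
proof (induction w arbitrary: L)
  case (Cons a w)
  have "nf_length (nf_letter s \<phi> a L) \<le> nf_length L + 1"
    using Cons.prems nf_length_nf_times_s[of L] nf_length_nf_times[OF is_nf_nonempty, of L]
    by (simp add: nf_letter_def)
  with Cons.IH[OF is_nf_nf_letter[OF Cons.prems, of s \<phi> a]] show ?case by simp
qed simp

lemma nf_letter_nf_letter:
  assumes "\<And>a. \<phi> a + \<phi> a = 0" and "is_nf L"
  shows "nf_letter s \<phi> a (nf_letter s \<phi> a L) = L"
  using assms is_nf_nonempty[OF assms(2)]
  by (simp add: nf_letter_def nf_times_s_nf_times_s nf_times_nf_times nf_times_zero)

lemma nf_letter_commute:
  assumes edge: "\<And>a. a \<noteq> s \<Longrightarrow> {s, a} \<in> X \<Longrightarrow> \<phi> a = 0"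
    and "{a, b} \<in> X" and "is_nf L"
  shows "nf_letter s \<phi> a (nf_letter s \<phi> b L) = nf_letter s \<phi> b (nf_letter s \<phi> a L)"
proof -
  have trivial: "nf_letter s \<phi> c L' = L'" if "c \<noteq> s" "{s, c} \<in> X" "L' \<noteq> []" for c L'
    using that edge[OF that(1,2)] by (simp add: nf_letter_def nf_times_zero)
  have nonempty: "L \<noteq> []" "nf_letter s \<phi> c L \<noteq> []" for c
    using is_nf_nonempty[OF assms(3)] is_nf_nonempty[OF is_nf_nf_letter[OF assms(3)]] by simp_all
  consider "a = b" | "a = s" "b \<noteq> s" | "b = s" "a \<noteq> s" | "a \<noteq> s" "b \<noteq> s"
    by blast
  then show ?thesis
  proof cases
    case 2
    then show ?thesis using trivial[of b] nonempty assms(2) by simp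
  next
    case 3
    then show ?thesis using trivial[of a] nonempty assms(2) by (simp add: insert_commute)
  next
    case 4
    then show ?thesis using nonempty(1) by (simp add: nf_letter_def nf_times_nf_times add.commute)
  qed simp
qed

lemma nf_act_racg_step:
  assumes "\<And>a. \<phi> a + \<phi> a = 0" and "\<And>a. a \<noteq> s \<Longrightarrow> {s, a} \<in> X \<Longrightarrow> \<phi> a = 0"
    and "racg_step S X w v" and "is_nf L"
  shows "nf_act s \<phi> w L = nf_act s \<phi> v L"
proof -
  obtain p q a b where
    "(w = p @ [a, a] @ q \<and> v = p @ q) \<or> (w = p @ q \<and> v = p @ [a, a] @ q) \<or>
     ({a, b} \<in> X \<and> w = p @ [a, b] @ q \<and> v = p @ [b, a] @ q)"
    using assms(3) unfolding racg_step_def by blast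
  moreover have nf: "is_nf (nf_act s \<phi> p L)"
    using assms(4) by (rule is_nf_nf_act)
  ultimately show ?thesis
  proof (elim disjE conjE)
    assume "{a, b} \<in> X" "w = p @ [a, b] @ q" "v = p @ [b, a] @ q"
    then show ?thesis
      using nf_letter_commute[of s X \<phi> a b, OF assms(2) _ nf] by simp
  qed (simp_all add: nf_letter_nf_letter[of \<phi>, OF assms(1) nf])
qed

lemma nf_act_racg_elem:
  assumes "\<And>a. \<phi> a + \<phi> a = 0" and "\<And>a. a \<noteq> s \<Longrightarrow> {s, a} \<in> X \<Longrightarrow> \<phi> a = 0"
    and "v \<in> racg_elem S X w" and "is_nf L"
  shows "nf_act s \<phi> v L = nf_act s \<phi> w L"
proof -
  have "racg_equiv S X w v"
    using assms(3) by (simp add: racg_elem_def)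
  then have "nf_act s \<phi> w L = nf_act s \<phi> v L"
    unfolding racg_equiv_def
    by (induction rule: rtranclp_induct) (simp_all add: nf_act_racg_step[OF assms(1,2) _ assms(4)])
  then show ?thesis by simp
qed

definition alternating_word :: "'a \<Rightarrow> 'a list \<Rightarrow> 'a list" where
  "alternating_word s as = concat (map (\<lambda>a. [a, s]) as)"

lemma length_alternating_word: "length (alternating_word s as) = 2 * length as"
  by (induction as) (simp_all add: alternating_word_def)

lemma set_alternating_word: "set (alternating_word s as) \<subseteq> insert s (set as)"
  by (induction as) (auto simp: alternating_word_def)

lemma nf_act_alternating_word:
  assumes "\<And>a. a \<in> set as \<Longrightarrow> a \<noteq> s \<and> \<phi> a \<noteq> 0"
  shows "nf_act s \<phi> (alternating_word s as) (0 # r) = 0 # rev (map \<phi> as) @ r"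
  using assms
proof (induction as arbitrary: r)
  case (Cons a as)
  have "nf_act s \<phi> [a, s] (0 # r) = 0 # \<phi> a # r"
    using Cons.prems by (cases r) (simp_all add: nf_letter_def)
  then show ?case
    using Cons by (simp add: alternating_word_def)
qed (simp add: alternating_word_def)

lemma nf_length_alternating_word:
  assumes "\<And>a. a \<in> set as \<Longrightarrow> a \<noteq> s \<and> \<phi> a \<noteq> 0"
  shows "nf_length (nf_act s \<phi> (alternating_word s as) [0]) = 2 * length as"
proof -
  have "filter (\<lambda>g. g \<noteq> 0) (rev (map \<phi> as)) = rev (map \<phi> as)"
    using assms by (auto simp: filter_id_conv)
  then show ?thesis
    using nf_act_alternating_word[of as s \<phi> "[]", OF assms] by (simp add: nf_length_def)
qed

section \<open>Exponential growth from a vertex with two non-neighbours\<close>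

lemma racg_length_alternating_word:
  fixes \<phi> :: "'a \<Rightarrow> 'g::ab_group_add"
  assumes "\<And>a. \<phi> a + \<phi> a = 0" and "\<And>a. a \<noteq> s \<Longrightarrow> {s, a} \<in> X \<Longrightarrow> \<phi> a = 0"
    and "\<And>a. a \<in> set as \<Longrightarrow> a \<noteq> s \<and> \<phi> a \<noteq> 0" and "s \<in> S" and "set as \<subseteq> S"
  shows "racg_length (racg_elem S X (alternating_word s as)) = 2 * length as"
proof (rule antisym)
  have w: "alternating_word s as \<in> racg_elem S X (alternating_word s as)"
    using set_alternating_word[of s as] assms(4,5) by (intro racg_elem_self) auto
  then show "racg_length (racg_elem S X (alternating_word s as)) \<le> 2 * length as"
    using racg_length_le length_alternating_word by metis
  show "2 * length as \<le> racg_length (racg_elem S X (alternating_word s as))"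
  proof (rule le_racg_length)
    fix v assume "v \<in> racg_elem S X (alternating_word s as)"
    then have "nf_act s \<phi> v [0] = nf_act s \<phi> (alternating_word s as) [0]"
      using nf_act_racg_elem[of \<phi> s X v S "alternating_word s as" "[0]"] assms(1,2) by simp
    then have "2 * length as = nf_length (nf_act s \<phi> v [0])"
      using nf_length_alternating_word[of as s \<phi>, OF assms(3)] by simp
    also have "\<dots> \<le> length v"
      using nf_length_nf_act[of "[0]" s \<phi> v] by (simp add: nf_length_def)
    finally show "2 * length as \<le> length v" .
  qed (use w in blast)
qed

lemma racg_elem_alternating_word_eqD:
  fixes \<phi> :: "'a \<Rightarrow> 'g::ab_group_add"
  assumes "\<And>a. \<phi> a + \<phi> a = 0" and "\<And>a. a \<noteq> s \<Longrightarrow> {s, a} \<in> X \<Longrightarrow> \<phi> a = 0"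
    and "\<And>a. a \<in> set as \<union> set bs \<Longrightarrow> a \<noteq> s \<and> \<phi> a \<noteq> 0" and "s \<in> S" and "set bs \<subseteq> S"
    and "racg_elem S X (alternating_word s as) = racg_elem S X (alternating_word s bs)"
  shows "map \<phi> as = map \<phi> bs"
proof -
  have "alternating_word s bs \<in> racg_elem S X (alternating_word s as)"
    using set_alternating_word[of s bs] assms(4-6) racg_elem_self[of "alternating_word s bs" S X]
    by auto
  then have "nf_act s \<phi> (alternating_word s bs) [0] = nf_act s \<phi> (alternating_word s as) [0]"
    using nf_act_racg_elem[of \<phi> s X _ S _ "[0]"] assms(1,2) by simp
  moreover have "nf_act s \<phi> (alternating_word s cs) [0] = 0 # rev (map \<phi> cs)"
    if "cs \<in> {as, bs}" for cs
    using nf_act_alternating_word[of cs s \<phi> "[]"] assms(3) that by auto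
  ultimately show ?thesis
    by simp
qed

lemma growth_coeff_ge_power_2:
  assumes "finite S" and "s \<in> S" "t \<in> S" "u \<in> S" and "s \<noteq> t" "s \<noteq> u" "t \<noteq> u"
    and "{s, t} \<notin> X" "{s, u} \<notin> X"
  shows "2 ^ k \<le> growth_coeff S X (2 * k)"
proof -
  define \<phi> :: "'a \<Rightarrow> bit \<times> bit"
    where "\<phi> a = (if a = t then (1, 0) else if a = u then (0, 1) else 0)" for a
  define A where "A = {as. set as \<subseteq> {t, u} \<and> length as = k}"
  let ?g = "\<lambda>as. racg_elem S X (alternating_word s as)"
  have invol: "\<phi> a + \<phi> a = 0" for a
    by (simp add: \<phi>_def zero_prod_def)
  have edge: "\<phi> a = 0" if "a \<noteq> s" "{s, a} \<in> X" for a
    using that assms(8,9) by (auto simp: \<phi>_def)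
  have letters: "a \<noteq> s \<and> \<phi> a \<noteq> 0" if "a \<in> {t, u}" for a
    using that assms(5-7) by (auto simp: \<phi>_def zero_prod_def)
  have "inj_on ?g A"
  proof (rule inj_onI)
    fix as bs assume as_bs: "as \<in> A" "bs \<in> A" and "?g as = ?g bs"
    moreover have "a \<noteq> s \<and> \<phi> a \<noteq> 0" if "a \<in> set as \<union> set bs" for a
      using that as_bs letters by (auto simp: A_def)
    moreover have "set bs \<subseteq> S"
      using as_bs assms(3,4) by (auto simp: A_def)
    ultimately have "map \<phi> as = map \<phi> bs"
      using racg_elem_alternating_word_eqD[of \<phi> s X as bs S, OF invol edge _ assms(2)] by blast
    moreover have "inj_on \<phi> (set as \<union> set bs)"
      using as_bs assms(7) by (auto simp: A_def \<phi>_def inj_on_def)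
    ultimately show "as = bs"
      by (simp add: inj_on_map_eq_map)
  qed
  moreover have "?g ` A \<subseteq> {g \<in> racg S X. racg_length g = 2 * k}"
  proof
    fix g assume "g \<in> ?g ` A"
    then obtain as where "as \<in> A" and g: "g = ?g as"
      by blast
    then have "racg_length g = 2 * k" and "alternating_word s as \<in> lists S"
      using racg_length_alternating_word[of \<phi> s X as S, OF invol edge] letters assms(2-4)
        set_alternating_word[of s as]
      by (auto simp: A_def)
    with g show "g \<in> {g \<in> racg S X. racg_length g = 2 * k}"
      by (simp add: racg_def)
  qed
  ultimately have "card A \<le> card {g \<in> racg S X. racg_length g = 2 * k}"
    using finite_racg_level[OF assms(1)] by (rule card_inj_on_le)
  then show ?thesis
    using assms(7) by (simp add: growth_coeff_def A_def card_lists_length_eq numeral_2_eq_2)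
qed

lemma conv_radius_lt_1_if_power_2_le:
  fixes a :: "nat \<Rightarrow> real"
  assumes "\<And>k. 2 ^ k \<le> a (2 * k)"
  shows "conv_radius a < 1"
proof -
  define z :: real where "z = sqrt (1 / 2)"
  have z: "z ^ 2 = 1 / 2" "0 < z" "z < 1"
    by (simp_all add: z_def real_sqrt_lt_1_iff)
  have "\<not> summable (\<lambda>n. norm (a n * z ^ n))"
  proof
    assume "summable (\<lambda>n. norm (a n * z ^ n))"
    then have "(\<lambda>n. norm (a n * z ^ n)) \<longlonglongrightarrow> 0"
      by (rule summable_LIMSEQ_zero)
    then have "(\<lambda>k. norm (a (2 * k) * z ^ (2 * k))) \<longlonglongrightarrow> 0"
      using LIMSEQ_subseq_LIMSEQ[of _ 0 "\<lambda>k. 2 * k"] by (simp add: strict_mono_def o_def)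
    moreover have "1 \<le> norm (a (2 * k) * z ^ (2 * k))" for k
    proof -
      have "(1::real) = 2 ^ k * z ^ (2 * k)"
        by (simp add: power_mult z(1) power_one_over)
      also have "\<dots> \<le> a (2 * k) * z ^ (2 * k)"
        using assms z(2) by (simp add: mult_right_mono)
      finally show ?thesis by simp
    qed
    ultimately have "1 \<le> (0::real)"
      by (intro LIMSEQ_le_const) auto
    then show False by simp
  qed
  then have "conv_radius a \<le> norm z"
    by (rule conv_radius_leI)
  also have "\<dots> < 1"
    using z by simp
  finally show ?thesis .
qed

lemma non_neighbour_unique:
  assumes "simplicial_complex S X" and "1 \<le> conv_radius (\<lambda>n. real (growth_coeff S X n))"
    and "s \<in> S" "t \<in> S" "u \<in> S" and "{s, t} \<notin> X" "{s, u} \<notin> X"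
  shows "t = u"
proof (rule ccontr)
  assume "t \<noteq> u"
  moreover have "finite S" "s \<noteq> t" "s \<noteq> u"
    using assms(1,3,6,7) by (auto simp: simplicial_complex_def)
  ultimately have "conv_radius (\<lambda>n. real (growth_coeff S X n)) < 1"
    using growth_coeff_ge_power_2[OF _ assms(3-5) _ _ _ assms(6,7)]
    by (intro conv_radius_lt_1_if_power_2_le) simp
  with assms(2) show False
    by simp
qed

section \<open>Complete graphs give finite groups\<close>

lemma racg_equiv_move_right:
  assumes "\<And>x y. x \<in> S \<Longrightarrow> y \<in> S \<Longrightarrow> {x, y} \<in> X" and "a \<in> S" and "set q \<subseteq> S"
  shows "racg_equiv S X (p @ a # q @ r) (p @ q @ a # r)"
  using assms(3)
proof (induction q arbitrary: p)
  case (Cons x q)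
  have "racg_equiv S X (p @ a # (x # q) @ r) ((p @ [x]) @ a # q @ r)"
    using racg_equiv_swap[of a x X S p "q @ r"] assms(1,2) Cons.prems by simp
  also have "racg_equiv S X \<dots> ((p @ [x]) @ q @ a # r)"
    using Cons.IH[of "p @ [x]"] Cons.prems by simp
  finally show ?case
    by simp
qed (simp add: racg_equiv_refl)

lemma racg_equiv_distinct_word:
  assumes "\<And>x y. x \<in> S \<Longrightarrow> y \<in> S \<Longrightarrow> {x, y} \<in> X" and "w \<in> lists S"
  shows "\<exists>v \<in> lists S. distinct v \<and> racg_equiv S X w v"
  using assms(2)
proof (induction "length w" arbitrary: w rule: less_induct)
  case less
  show ?case
  proof (cases "distinct w")
    case False
    then obtain p a q r where w: "w = p @ [a] @ q @ [a] @ r"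
      using not_distinct_decomp by blast
    with less.prems have "a \<in> S" "set q \<subseteq> S"
      by auto
    have "racg_equiv S X w (p @ q @ a # a # r)"
      using racg_equiv_move_right[OF assms(1) \<open>a \<in> S\<close> \<open>set q \<subseteq> S\<close>, of p "a # r"] w by simp
    also have "racg_equiv S X \<dots> (p @ q @ r)"
      using racg_equiv_cancel[OF \<open>a \<in> S\<close>, of X "p @ q" r] by simp
    finally have "racg_equiv S X w (p @ q @ r)" .
    moreover obtain v where "v \<in> lists S" "distinct v" "racg_equiv S X (p @ q @ r) v"
      using less.hyps[of "p @ q @ r"] less.prems w by auto
    ultimately show ?thesis
      using racg_equiv_trans[of S X w "p @ q @ r" v] by blast
  qed (use less.prems racg_equiv_refl in blast)
qed

lemma conv_radius_growth_complete:
  assumes "finite S" and "\<And>x y. x \<in> S \<Longrightarrow> y \<in> S \<Longrightarrow> {x, y} \<in> X"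
  shows "conv_radius (\<lambda>n. real (growth_coeff S X n)) = \<infinity>"
proof -
  have bound: "racg_length g \<le> card S" if g: "g \<in> racg S X" for g
  proof -
    obtain w where w: "w \<in> lists S" "g = racg_elem S X w"
      using g unfolding racg_def by blast
    then obtain v where v: "v \<in> lists S" "distinct v" "racg_equiv S X w v"
      using racg_equiv_distinct_word[OF assms(2)] by blast
    then have "racg_length g \<le> length v"
      using w(2) by (intro racg_length_le) (simp add: racg_elem_def)
    also have "\<dots> \<le> card S"
      using v assms(1) by (metis card_mono distinct_card in_listsD subsetI)
    finally show ?thesis .
  qed
  have "growth_coeff S X n = 0" if "n > card S" for n
  proof -
    have "{g \<in> racg S X. racg_length g = n} = {}"
      using bound that by fastforce
    then show ?thesis
      unfolding growth_coeff_def by (metis card.empty)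
  qed
  then have "\<forall>\<^sub>F n in sequentially. real (growth_coeff S X n) = 0"
    by (auto simp: eventually_sequentially intro: exI[of _ "Suc (card S)"])
  then have "conv_radius (\<lambda>n. real (growth_coeff S X n)) = conv_radius (\<lambda>_. 0 :: real)"
    by (rule conv_radius_cong')
  then show ?thesis
    by simp
qed

section \<open>Flag complexes as joins\<close>

definition non_edges :: "'a set \<Rightarrow> 'a set set \<Rightarrow> 'a set set" where
  "non_edges S X = {{a, b} | a b. a \<in> S \<and> b \<in> S \<and> {a, b} \<notin> X}"

lemma finite_non_edges: "finite S \<Longrightarrow> finite (non_edges S X)"
  by (rule finite_subset[of _ "Pow S"]) (auto simp: non_edges_def)

lemma card_non_edge:
  assumes "simplicial_complex S X" and "p \<in> non_edges S X"
  shows "card p = 2"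
  using assms by (auto simp: non_edges_def simplicial_complex_def card_insert_if)

lemma non_edge_through:
  assumes "p \<in> non_edges S X" and "x \<in> p"
  obtains y where "p = {x, y}" "x \<in> S" "y \<in> S" "{x, y} \<notin> X"
proof -
  from assms(1) obtain a b where "p = {a, b}" "a \<in> S" "b \<in> S" "{a, b} \<notin> X"
    unfolding non_edges_def by blast
  moreover have "{b, a} = {a, b}"
    by (rule insert_commute)
  ultimately show thesis
    using assms(2) that[of a] that[of b] by auto
qed

lemma disjoint_non_edges:
  assumes "\<And>s t u. s \<in> S \<Longrightarrow> t \<in> S \<Longrightarrow> u \<in> S \<Longrightarrow> {s, t} \<notin> X \<Longrightarrow> {s, u} \<notin> X \<Longrightarrow> t = u"
  shows "disjoint (non_edges S X)"
proof (rule pairwiseI)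
  fix p q assume p: "p \<in> non_edges S X" and q: "q \<in> non_edges S X" and "p \<noteq> q"
  show "disjnt p q"
  proof (rule ccontr)
    assume "\<not> disjnt p q"
    then obtain x where "x \<in> p" "x \<in> q"
      by (auto simp: disjnt_def)
    with p q obtain y z where "p = {x, y}" "q = {x, z}" "x \<in> S" "y \<in> S" "z \<in> S" "{x, y} \<notin> X" "{x, z} \<notin> X"
      by (metis non_edge_through)
    with assms \<open>p \<noteq> q\<close> show False
      by blast
  qed
qed

text \<open>No disjointness of the non-edges is needed here: \<open>cross_polytope P\<close> is defined for
  any family \<open>P\<close>.\<close>

lemma flag_complex_eq_join_non_edges:
  assumes "flag_complex S X"
  shows "X = join_complex (cross_polytope (non_edges S X)) (full_simplex (S - \<Union>(non_edges S X)))"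
    (is "X = join_complex (cross_polytope ?P) (full_simplex ?B)")
proof
  have sc: "simplicial_complex S X"
    using assms by (simp add: flag_complex_def)
  show "X \<subseteq> join_complex (cross_polytope ?P) (full_simplex ?B)"
  proof
    fix \<sigma> assume "\<sigma> \<in> X"
    then have "\<sigma> \<subseteq> S" and "\<forall>p\<in>?P. \<not> p \<subseteq> \<sigma>"
      using sc unfolding simplicial_complex_def non_edges_def by blast+
    then have "\<sigma> \<inter> \<Union>?P \<in> cross_polytope ?P" "\<sigma> \<inter> ?B \<in> full_simplex ?B" "\<sigma> = \<sigma> \<inter> \<Union>?P \<union> \<sigma> \<inter> ?B"
      unfolding cross_polytope_def full_simplex_def by auto
    then show "\<sigma> \<in> join_complex (cross_polytope ?P) (full_simplex ?B)"
      unfolding join_complex_def by blast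
  qed
  show "join_complex (cross_polytope ?P) (full_simplex ?B) \<subseteq> X"
  proof
    fix \<rho> assume "\<rho> \<in> join_complex (cross_polytope ?P) (full_simplex ?B)"
    then obtain \<sigma> \<tau> where \<rho>: "\<rho> = \<sigma> \<union> \<tau>" "\<sigma> \<subseteq> \<Union>?P" "\<forall>p\<in>?P. \<not> p \<subseteq> \<sigma>" "\<tau> \<subseteq> ?B"
      unfolding join_complex_def cross_polytope_def full_simplex_def by blast
    have "\<rho> \<subseteq> S"
      using \<rho> by (auto simp: non_edges_def)
    moreover have "{x, y} \<in> X" if "x \<in> \<rho>" "y \<in> \<rho>" for x y
    proof (rule ccontr)
      assume "{x, y} \<notin> X"
      with that \<open>\<rho> \<subseteq> S\<close> have "{x, y} \<in> ?P"
        unfolding non_edges_def by blast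
      with \<rho> that show False by auto
    qed
    ultimately show "\<rho> \<in> X"
      using assms unfolding flag_complex_def by blast
  qed
qed

theorem proposition3p4p5:
  fixes S :: "'a set" and X :: "'a set set"
  assumes "flag_complex S X"
    and "conv_radius (\<lambda>n. real (growth_coeff S X n)) = 1"
  shows "\<exists>P B. finite P \<and> P \<noteq> {} \<and> (\<forall>p\<in>P. card p = 2) \<and> disjoint P \<and>
           finite B \<and> \<Union>P \<inter> B = {} \<and> \<Union>P \<union> B = S \<and>
           X = join_complex (cross_polytope P) (full_simplex B)"
proof -
  have sc: "simplicial_complex S X" and "finite S"
    using assms(1) by (simp_all add: flag_complex_def simplicial_complex_def)
  have "non_edges S X \<noteq> {}"
  proof
    assume "non_edges S X = {}"
    then have "conv_radius (\<lambda>n. real (growth_coeff S X n)) = \<infinity>"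
      by (intro conv_radius_growth_complete[OF \<open>finite S\<close>]) (auto simp: non_edges_def)
    with assms(2) show False
      by simp
  qed
  moreover have "disjoint (non_edges S X)"
    using non_neighbour_unique[OF sc] assms(2) by (intro disjoint_non_edges) simp
  ultimately show ?thesis
    using finite_non_edges[OF \<open>finite S\<close>] card_non_edge[OF sc] \<open>finite S\<close>
      flag_complex_eq_join_non_edges[OF assms(1)]
    by (intro exI[of _ "non_edges S X"] exI[of _ "S - \<Union>(non_edges S X)"]) (auto simp: non_edges_def)
qed

end
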